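(* Fix $\varepsilon_0>0$. There exists $C_0>0$ depending only on $a,b,\lambda,I_0,\varepsilon_0$ such that for every $\varepsilon\in[0,\varepsilon_0)$ and every solution $f_t$ of $\partial_tf=Q_\varepsilon[\mathscr J(f)]f$ with $f_0\in L^1(M)\cap\mathcal P(\mathbb R^2)$, $$\|f_t\|_{L^1(M)}\le\max(C_0,\|f_0\|_{L^1(M)})\quad\forall t\ge0.$$ Moreover, there exists $C_0'>0$ depending on $a,b,\lambda,I_0,\varepsilon_0$ and $\|f_0\|_{L^1(M)}$ such that $\sup_{t\ge0}|\mathscr J(f_t)|<C_0'$.
   Context: Fix real constants $a>0$, $b>0$, $\lambda$, $I_0$. $M=1+x^2/2+v^2/2$ on $\mathbb R^2$; $\|f\|_{L^1(M)}=\int|f|M$; $\mathcal P(\mathbb R^2)$ is the set of probability densities. $A=ax-bv$, $B(x,v;\varepsilon,j)=v(v-\lambda)(v-1)+x-\varepsilon(v-j)+I_0$, $\mathscr J(f)=\int vf\,dxdv$, $Q_\varepsilon[j]f=\partial_x(Af)+\partial_v(B(\cdot;\varepsilon,j)f)+\partial^2_{vv}f$. *)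

theory Defs
  imports "HOL-Analysis.Analysis"
begin

text \<open>Points of the phase space are pairs z = (x, v) :: real \<times> real.\<close>

definition Mw :: "real \<times> real \<Rightarrow> real" where
  "Mw z = 1 + (fst z)^2 / 2 + (snd z)^2 / 2"

definition L1M_norm :: "(real \<times> real \<Rightarrow> real) \<Rightarrow> real" where
  "L1M_norm g = (\<integral>z. \<bar>g z\<bar> * Mw z \<partial>lborel)"

definition in_L1M :: "(real \<times> real \<Rightarrow> real) \<Rightarrow> bool" where
  "in_L1M g \<longleftrightarrow> g \<in> borel_measurable lborel \<and> integrable lborel (\<lambda>z. \<bar>g z\<bar> * Mw z)"

definition prob_density :: "(real \<times> real \<Rightarrow> real) \<Rightarrow> bool" where
  "prob_density g \<longleftrightarrow> g \<in> borel_measurable lborel \<and> (\<forall>z. 0 \<le> g z)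
     \<and> integrable lborel g \<and> (\<integral>z. g z \<partial>lborel) = 1"

definition Jf :: "(real \<times> real \<Rightarrow> real) \<Rightarrow> real" where
  "Jf g = (\<integral>z. snd z * g z \<partial>lborel)"

definition Acoef :: "real \<Rightarrow> real \<Rightarrow> real \<times> real \<Rightarrow> real" where
  "Acoef a b z = a * fst z - b * snd z"

definition Bcoef :: "real \<Rightarrow> real \<Rightarrow> real \<Rightarrow> real \<Rightarrow> real \<times> real \<Rightarrow> real" where
  "Bcoef lam I0 eps j z =
     snd z * (snd z - lam) * (snd z - 1) + fst z - eps * (snd z - j) + I0"

definition test_fun :: "(real \<times> real \<Rightarrow> real) \<Rightarrow> (real \<times> real \<Rightarrow> real) \<Rightarrow>
    (real \<times> real \<Rightarrow> real) \<Rightarrow> (real \<times> real \<Rightarrow> real) \<Rightarrow> bool" where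
  "test_fun phi phix phiv phivv \<longleftrightarrow>
     (\<forall>z. (phi has_derivative (\<lambda>h. phix z * fst h + phiv z * snd h)) (at z))
   \<and> (\<forall>x v. ((\<lambda>w. phiv (x, w)) has_real_derivative phivv (x, v)) (at v))
   \<and> continuous_on UNIV phix \<and> continuous_on UNIV phiv \<and> continuous_on UNIV phivv
   \<and> compact (closure {z. phi z \<noteq> 0})"

text \<open>Weak solution of  d/dt f = Q_eps[J(f)] f  on [0,\<infinity>): each f t is a probability
  density, f is jointly measurable, has locally-in-time integrable moments of the order
  needed by the drift (1 + x^2 + v^4), and for every test function
  int phi f_t = int phi f_0 + int_0^t int f_s (-A phi_x - B(.;eps,J(f_s)) phi_v + phi_vv).\<close>

definition is_solution :: "real \<Rightarrow> real \<Rightarrow> real \<Rightarrow> real \<Rightarrow> real \<Rightarrow>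
    (real \<Rightarrow> real \<times> real \<Rightarrow> real) \<Rightarrow> bool" where
  "is_solution a b lam I0 eps f \<longleftrightarrow>
     (\<forall>t\<ge>0. prob_density (f t))
   \<and> (\<lambda>(s, z). f s z) \<in> borel_measurable (lborel :: (real \<times> (real \<times> real)) measure)
   \<and> (\<forall>T\<ge>0. set_integrable (lborel :: (real \<times> (real \<times> real)) measure) ({0..T} \<times> UNIV)
          (\<lambda>(s, z). (1 + (fst z)^2 + (snd z)^4) * f s z))
   \<and> (\<forall>phi phix phiv phivv. test_fun phi phix phiv phivv \<longrightarrow>
        (\<forall>t\<ge>0. (\<integral>z. phi z * f t z \<partial>lborel) =
            (\<integral>z. phi z * f 0 z \<partial>lborel)
          + (\<integral>s\<in>{0..t}. (\<integral>z. f s z * (- Acoef a b z * phix z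
                 - Bcoef lam I0 eps (Jf (f s)) z * phiv z + phivv z) \<partial>lborel) \<partial>lborel)))"

end

theory Submission
  imports Defs
begin

text \<open>For the moment \<open>m(t) = \<integral> f\<^sub>t M\<close> one has, formally, \<open>m' = \<integral> f\<^sub>t Q\<^sup>*M\<close>, where
  \<open>Q\<^sup>*M = -A x - B v + 1\<close> is a quartic polynomial whose leading part is \<open>-a x\<^sup>2 - v\<^sup>4\<close>. Young's
  inequality gives \<open>Q\<^sup>*M \<le> C - a M\<close> pointwise, up to the term \<open>\<epsilon> J v\<close> coming from the mean field,
  which integrates to \<open>-\<epsilon> J\<^sup>2 \<le> 0\<close>. Hence \<open>m' \<le> C - a m\<close> and \<open>m\<close> never exceeds \<open>max (C/a) (m 0)\<close>;
  moreover \<open>|J(f\<^sub>t)| \<le> \<integral> |v| f\<^sub>t \<le> m(t)\<close>. To make this rigorous, the weak formulation is tested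
  with the compactly supported truncations \<open>R \<cdot> ramp (M/R)\<close> of \<open>M\<close>, and \<open>R \<rightarrow> \<infinity>\<close> is taken by
  dominated convergence in \<open>(t, x, v)\<close>, using that the solution has finite moments
  \<open>\<integral> (1 + x\<^sup>2 + v\<^sup>4) f\<^sub>s\<close> for almost every \<open>s\<close>; Fatou's lemma shows that \<open>f\<^sub>t M\<close> is integrable.\<close>

lemma borel_measurable_snd_real [measurable]: "(snd :: real \<times> real \<Rightarrow> real) \<in> borel_measurable borel"
  by (intro borel_measurable_continuous_onI continuous_intros)

lemma borel_measurable_comp_snd [measurable]:
  fixes g :: "real \<times> real \<Rightarrow> real"
  shows "g \<in> borel_measurable borel \<Longrightarrow> (\<lambda>x. g (snd x)) \<in> borel_measurable (lborel \<Otimes>\<^sub>M lborel)"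
  using measurable_compose[OF measurable_snd, of g lborel lborel] by simp

lemma has_real_derivative_glue:
  fixes g h g' h' :: "real \<Rightarrow> real"
  assumes g: "\<And>x. (g has_real_derivative g' x) (at x)"
    and h: "\<And>x. (h has_real_derivative h' x) (at x)"
    and eq: "g c = h c" "g' c = h' c"
  shows "((\<lambda>x. if x \<le> c then g x else h x) has_real_derivative
            (if x \<le> c then g' x else h' x)) (at x)"
proof -
  let ?F = "\<lambda>x. if x \<le> c then g x else h x"
  consider "x < c" | "x = c" | "x > c" by linarith
  then show ?thesis
  proof cases
    case 1
    have "(?F has_real_derivative g' x) (at x)"
      by (rule has_field_derivative_transform_within_open[OF g, where S="{..<c}"]) (use 1 in auto)
    then show ?thesis using 1 by simp
  next
    case 2
    have "((\<lambda>y. (g y - g c) / (y - c)) \<longlongrightarrow> g' c) (at_left c)"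
      using g[of c] by (auto simp: has_field_derivative_iff intro: filterlim_mono at_le)
    then have "((\<lambda>y. (?F y - ?F c) / (y - c)) \<longlongrightarrow> g' c) (at_left c)"
      by (rule Lim_transform_eventually) (auto simp: eventually_at_filter)
    moreover have "((\<lambda>y. (h y - h c) / (y - c)) \<longlongrightarrow> g' c) (at_right c)"
      using h[of c] eq by (auto simp: has_field_derivative_iff intro: filterlim_mono at_le)
    then have "((\<lambda>y. (?F y - ?F c) / (y - c)) \<longlongrightarrow> g' c) (at_right c)"
      by (rule Lim_transform_eventually) (use eq in \<open>auto simp: eventually_at_filter\<close>)
    ultimately show ?thesis
      using 2 by (simp add: has_field_derivative_iff filterlim_split_at)
  qed (auto intro: has_field_derivative_transform_within_open[OF h, where S="{c<..}"])
qed

lemma integrable_of_nonneg_tendsto_bounded: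
  fixes g :: "nat \<Rightarrow> 'a \<Rightarrow> real" and G :: "'a \<Rightarrow> real"
  assumes int: "\<And>n. integrable M (g n)" and nonneg: "\<And>n x. 0 \<le> g n x"
    and lim: "\<And>x. (\<lambda>n. g n x) \<longlonglongrightarrow> G x" and meas: "G \<in> borel_measurable M"
    and bound: "\<And>n. integral\<^sup>L M (g n) \<le> B"
  shows "integrable M G"
proof (rule integrableI_nonneg[OF meas])
  have "0 \<le> G x" for x
    using lim by (rule LIMSEQ_le_const) (use nonneg in auto)
  then show "AE x in M. 0 \<le> G x" by simp
  have "(\<integral>\<^sup>+x. ennreal (G x) \<partial>M) = (\<integral>\<^sup>+x. liminf (\<lambda>n. ennreal (g n x)) \<partial>M)"
    using lim by (intro nn_integral_cong lim_imp_Liminf[symmetric] tendsto_ennrealI) auto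
  also have "\<dots> \<le> liminf (\<lambda>n. \<integral>\<^sup>+x. ennreal (g n x) \<partial>M)"
    using int by (intro nn_integral_liminf) auto
  also have "\<dots> = liminf (\<lambda>n. ennreal (integral\<^sup>L M (g n)))"
    using int nonneg by (simp add: nn_integral_eq_integral)
  also have "\<dots> \<le> ennreal B"
    using bound by (intro Liminf_le_Limsup[THEN order_trans] Limsup_bounded always_eventually allI ennreal_leI) auto
  finally show "(\<integral>\<^sup>+x. ennreal (G x) \<partial>M) < \<infinity>"
    using ennreal_less_top[of B] unfolding infinity_ennreal_def by (rule le_less_trans)
qed

lemma square_integral_le_integral_square:
  fixes g h :: "'a \<Rightarrow> real"
  assumes g: "\<And>x. 0 \<le> g x" "integrable M g" "integral\<^sup>L M g = 1"
    and gh: "integrable M (\<lambda>x. g x * h x)" "integrable M (\<lambda>x. g x * (h x)^2)"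
  shows "(\<integral>x. g x * h x \<partial>M)^2 \<le> (\<integral>x. g x * (h x)^2 \<partial>M)"
proof -
  define c where "c = (\<integral>x. g x * h x \<partial>M)"
  have "0 \<le> (\<integral>x. g x * (h x - c)^2 \<partial>M)"
    using g by (intro integral_nonneg_AE) auto
  also have "\<dots> = (\<integral>x. g x * (h x)^2 - 2 * c * (g x * h x) + c^2 * g x \<partial>M)"
    by (intro Bochner_Integration.integral_cong) (auto simp: power2_eq_square algebra_simps)
  also have "\<dots> = (\<integral>x. g x * (h x)^2 \<partial>M) - c^2"
    using g gh by (simp add: c_def power2_eq_square)
  finally show ?thesis by (simp add: c_def)
qed

lemma last_time_le:
  fixes m :: "real \<Rightarrow> real"
  assumes m_cont: "continuous_on {l..u} m" and "l \<le> u" "m l \<le> K"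
  obtains t0 where "l \<le> t0" "t0 \<le> u" "m t0 \<le> K" "\<And>s. t0 < s \<Longrightarrow> s \<le> u \<Longrightarrow> K < m s"
proof -
  define S where "S = {l..u} \<inter> m -` {..K}"
  have "closed S" unfolding S_def
    by (rule continuous_closed_preimage[OF m_cont]) auto
  moreover have "l \<in> S" "bdd_above S"
    using assms by (auto simp: S_def intro: bdd_aboveI[where M=u])
  ultimately have "Sup S \<in> S"
    using closed_contains_Sup by blast
  moreover have "K < m s" if "Sup S < s" "s \<le> u" for s
  proof (rule ccontr)
    assume "\<not> K < m s"
    then have "s \<in> S" using that \<open>Sup S \<in> S\<close> by (auto simp: S_def)
    then show False using cSup_upper[OF _ \<open>bdd_above S\<close>] that by fastforce
  qed
  ultimately show ?thesis
    using that by (auto simp: S_def)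
qed

lemma dissipative_integral_equation_bound:
  fixes m h :: "real \<Rightarrow> real"
  assumes a: "0 < a"
    and h_int: "\<And>T. 0 \<le> T \<Longrightarrow> set_integrable lborel {0..T} h"
    and m_eq: "\<And>t. 0 \<le> t \<Longrightarrow> m t = m 0 + (\<integral>s\<in>{0..t}. h s \<partial>lborel)"
    and h_le: "AE s in lborel. 0 \<le> s \<longrightarrow> h s \<le> C - a * m s"
    and t1: "0 \<le> t1"
  shows "m t1 \<le> max (C / a) (m 0)"
proof (rule ccontr)
  define K where "K = max (C / a) (m 0)"
  assume "\<not> m t1 \<le> max (C / a) (m 0)"
  then have big: "K < m t1" unfolding K_def by linarith
  have m_eq': "m t = m 0 + integral {0..t} h" if "0 \<le> t" for t
    using m_eq[OF that] set_borel_integral_eq_integral(2)[OF h_int[OF that]] by simp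
  have h_on: "h integrable_on {0..t1}"
    using set_borel_integral_eq_integral(1)[OF h_int[OF t1]] by simp
  then have "continuous_on {0..t1} (\<lambda>t. m 0 + integral {0..t} h)"
    by (intro continuous_intros indefinite_integral_continuous_1)
  then have "continuous_on {0..t1} m"
    by (rule continuous_on_eq) (metis atLeastAtMost_iff m_eq')
  then obtain t0 where t0: "0 \<le> t0" "t0 \<le> t1" "m t0 \<le> K"
    and after: "\<And>s. t0 < s \<Longrightarrow> s \<le> t1 \<Longrightarrow> K < m s"
    using t1 by (rule last_time_le[where K=K]) (auto simp: K_def)
  have int: "set_integrable lborel {t0..t1} h"
    by (rule set_integrable_subset[OF h_int[OF t1]]) (use t0 in auto)
  have "m t1 - m t0 = (\<integral>s\<in>{t0..t1}. h s \<partial>lborel)"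
    using m_eq'[OF t1] m_eq'[OF t0(1)] Henstock_Kurzweil_Integration.integral_combine[OF t0(1,2) h_on]
      set_borel_integral_eq_integral(2)[OF int] by linarith
  also have "\<dots> \<le> (\<integral>s\<in>{t0..t1}. 0 \<partial>lborel)"
  proof (rule set_integral_mono_AE[OF int])
    text \<open>Above \<open>K \<ge> C/a\<close> the dissipation makes \<open>h\<close> nonpositive.\<close>
    have "C / a \<le> K" by (simp add: K_def)
    then have "C \<le> a * K" using a by (simp add: field_simps)
    show "AE s\<in>{t0..t1} in lborel. h s \<le> 0"
      using h_le AE_lborel_singleton[of t0]
    proof eventually_elim
      case (elim s)
      show ?case
      proof
        assume "s \<in> {t0..t1}"
        with elim have "a * K < a * m s" "h s \<le> C - a * m s"
          using after[of s] t0 a by auto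
        with \<open>C \<le> a * K\<close> show "h s \<le> 0" by linarith
      qed
    qed
  qed (simp add: set_integrable_def)
  finally show False using t0(3) big by simp
qed

section \<open>A \<open>C\<^sup>2\<close> cutoff\<close>

text \<open>\<open>ramp_poly\<close> is the quintic Hermite interpolant on \<open>[0, 1]\<close> from value 1, slope 1 and curvature 0
  to value, slope and curvature 0, so that \<open>ramp\<close> glues \<open>s \<mapsto> s\<close> to \<open>0\<close> in a \<open>C\<^sup>2\<close> way.\<close>

definition ramp_poly :: "real \<Rightarrow> real" where
  "ramp_poly u = 1 + u - 16*u^3 + 23*u^4 - 9*u^5"
definition ramp_poly_d :: "real \<Rightarrow> real" where
  "ramp_poly_d u = 1 - 48*u^2 + 92*u^3 - 45*u^4"
definition ramp_poly_dd :: "real \<Rightarrow> real" where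
  "ramp_poly_dd u = - 96*u + 276*u^2 - 180*u^3"

definition ramp :: "real \<Rightarrow> real" where
  "ramp s = (if s \<le> 1 then s else if s \<le> 2 then ramp_poly (s - 1) else 0)"
definition ramp_d :: "real \<Rightarrow> real" where
  "ramp_d s = (if s \<le> 1 then 1 else if s \<le> 2 then ramp_poly_d (s - 1) else 0)"
definition ramp_dd :: "real \<Rightarrow> real" where
  "ramp_dd s = (if s \<le> 1 then 0 else if s \<le> 2 then ramp_poly_dd (s - 1) else 0)"

lemma ramp_has_derivative: "(ramp has_real_derivative ramp_d s) (at s)"
  unfolding ramp_def[abs_def] ramp_d_def
  by (intro has_real_derivative_glue)
     (auto intro!: derivative_eq_intros simp: ramp_poly_def ramp_poly_d_def eval_nat_numeral algebra_simps)

lemma ramp_d_has_derivative: "(ramp_d has_real_derivative ramp_dd s) (at s)"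
  unfolding ramp_d_def[abs_def] ramp_dd_def
  by (intro has_real_derivative_glue)
     (auto intro!: derivative_eq_intros simp: ramp_poly_d_def ramp_poly_dd_def eval_nat_numeral algebra_simps)

lemma continuous_on_ramp: "continuous_on UNIV ramp"
  using ramp_has_derivative by (meson DERIV_isCont continuous_at_imp_continuous_on)

lemma continuous_on_ramp_d: "continuous_on UNIV ramp_d"
  using ramp_d_has_derivative by (meson DERIV_isCont continuous_at_imp_continuous_on)

lemma continuous_on_ramp_dd: "continuous_on UNIV ramp_dd"
proof -
  have clamp: "ramp_dd = (\<lambda>s. ramp_poly_dd (min 1 (max 0 (s - 1))))"
    by (auto simp: fun_eq_iff ramp_dd_def ramp_poly_dd_def min_def max_def)
  show ?thesis
    unfolding clamp ramp_poly_dd_def by (intro continuous_intros)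
qed

lemma borel_measurable_ramp [measurable]: "ramp \<in> borel_measurable borel"
  and borel_measurable_ramp_d [measurable]: "ramp_d \<in> borel_measurable borel"
  and borel_measurable_ramp_dd [measurable]: "ramp_dd \<in> borel_measurable borel"
  by (simp_all add: borel_measurable_continuous_onI continuous_on_ramp continuous_on_ramp_d
      continuous_on_ramp_dd)

lemma ramp_eq_id: "s \<le> 1 \<Longrightarrow> ramp s = s \<and> ramp_d s = 1 \<and> ramp_dd s = 0"
  by (simp add: ramp_def ramp_d_def ramp_dd_def)

lemma ramp_eq_0: "2 < s \<Longrightarrow> ramp s = 0 \<and> ramp_d s = 0 \<and> ramp_dd s = 0"
  by (simp add: ramp_def ramp_d_def ramp_dd_def)

lemma ramp_nonneg: assumes "0 \<le> s" shows "0 \<le> ramp s"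
proof -
  have "ramp_poly u = (1 - u)^3 * ((3*u + 2/3)^2 + 5/9)" for u
    by (simp add: ramp_poly_def algebra_simps power2_eq_square power3_eq_cube eval_nat_numeral)
  then have "0 \<le> ramp_poly u" if "u \<le> 1" for u
    using that by simp
  then show ?thesis using assms by (simp add: ramp_def)
qed

lemma ramp_le: assumes "0 \<le> s" shows "ramp s \<le> s"
proof -
  have "ramp_poly u = 1 + u - u^3 * ((3*u - 23/6)^2 + 47/36)" for u
    by (simp add: ramp_poly_def algebra_simps power2_eq_square power3_eq_cube eval_nat_numeral)
  then have "ramp_poly u \<le> 1 + u" if "0 \<le> u" for u
    using that by simp
  from this[of "s - 1"] show ?thesis using assms by (simp add: ramp_def)
qed

lemma abs_ramp_d_le: "\<bar>ramp_d s\<bar> \<le> 186"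
proof -
  have "\<bar>ramp_poly_d u\<bar> \<le> 186" if "0 \<le> u" "u \<le> 1" for u
  proof -
    have "u^2 \<le> 1" "u^3 \<le> 1" "u^4 \<le> 1" "0 \<le> u^2" "0 \<le> u^3" "0 \<le> u^4"
      using that by (auto simp: power_le_one)
    then show ?thesis unfolding ramp_poly_d_def by linarith
  qed
  then show ?thesis by (simp add: ramp_d_def)
qed

lemma abs_ramp_dd_le: "\<bar>ramp_dd s\<bar> \<le> 552"
proof -
  have "\<bar>ramp_poly_dd u\<bar> \<le> 552" if "0 \<le> u" "u \<le> 1" for u
  proof -
    have "u^2 \<le> 1" "u^3 \<le> 1" "0 \<le> u^2" "0 \<le> u^3"
      using that by (auto simp: power_le_one)
    then show ?thesis unfolding ramp_poly_dd_def using that by linarith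
  qed
  then show ?thesis by (simp add: ramp_dd_def)
qed

section \<open>The weight \<open>M\<close> and its truncations\<close>

lemma Mw_has_derivative: "(Mw has_derivative (\<lambda>h. fst z * fst h + snd z * snd h)) (at z)"
  unfolding Mw_def[abs_def] by (auto intro!: derivative_eq_intros simp: fun_eq_iff)

lemma continuous_on_Mw: "continuous_on UNIV Mw"
  unfolding Mw_def[abs_def] by (intro continuous_intros) auto

lemma borel_measurable_Mw [measurable]: "Mw \<in> borel_measurable borel"
  by (rule borel_measurable_continuous_onI[OF continuous_on_Mw])

lemma Mw_ge_1: "1 \<le> Mw z"
  by (simp add: Mw_def)

lemma abs_snd_le_Mw: "\<bar>snd z\<bar> \<le> Mw z"
proof -
  have "0 \<le> (\<bar>snd z\<bar> - 1)^2" by simp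
  then have "2 * \<bar>snd z\<bar> \<le> 1 + (snd z)^2"
    by (simp add: power2_eq_square algebra_simps abs_mult_self_eq)
  moreover have "0 \<le> (fst z)^2" by simp
  ultimately show ?thesis unfolding Mw_def by linarith
qed

lemma compact_Mw_sublevel: "compact {z. Mw z \<le> c}"
proof (rule compact_eq_bounded_closed[THEN iffD2], rule conjI)
  show "closed {z. Mw z \<le> c}"
    using continuous_on_Mw by (intro closed_Collect_le) (auto intro: continuous_intros)
  have "norm z \<le> 2 * c" if "Mw z \<le> c" for z
  proof -
    have "norm z \<le> \<bar>fst z\<bar> + \<bar>snd z\<bar>"
      by (metis norm_Pair_le prod.collapse real_norm_def)
    moreover have "\<bar>fst z\<bar> \<le> Mw z" "\<bar>snd z\<bar> \<le> Mw z"
      using abs_snd_le_Mw[of z] abs_snd_le_Mw[of "(snd z, fst z)"] by (simp_all add: Mw_def)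
    ultimately show ?thesis using that by linarith
  qed
  then show "bounded {z. Mw z \<le> c}"
    unfolding bounded_iff by blast
qed

definition Mw_trunc :: "real \<Rightarrow> real \<times> real \<Rightarrow> real" where
  "Mw_trunc R z = R * ramp (Mw z / R)"
definition Mw_trunc_dx :: "real \<Rightarrow> real \<times> real \<Rightarrow> real" where
  "Mw_trunc_dx R z = ramp_d (Mw z / R) * fst z"
definition Mw_trunc_dv :: "real \<Rightarrow> real \<times> real \<Rightarrow> real" where
  "Mw_trunc_dv R z = ramp_d (Mw z / R) * snd z"
definition Mw_trunc_dvv :: "real \<Rightarrow> real \<times> real \<Rightarrow> real" where
  "Mw_trunc_dvv R z = ramp_dd (Mw z / R) / R * (snd z)^2 + ramp_d (Mw z / R)"

lemma test_fun_Mw_trunc: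
  assumes R: "0 < R"
  shows "test_fun (Mw_trunc R) (Mw_trunc_dx R) (Mw_trunc_dv R) (Mw_trunc_dvv R)"
  unfolding test_fun_def
proof (intro conjI allI)
  fix z :: "real \<times> real"
  have "((\<lambda>z. Mw z / R) has_derivative (\<lambda>h. (fst z * fst h + snd z * snd h) / R)) (at z)"
    using Mw_has_derivative[of z] R by (auto intro!: derivative_eq_intros)
  from has_derivative_mult_right[OF DERIV_compose_FDERIV[OF ramp_has_derivative this], of R]
  have "(Mw_trunc R has_derivative
      (\<lambda>h. R * ((fst z * fst h + snd z * snd h) / R * ramp_d (Mw z / R)))) (at z)"
    unfolding Mw_trunc_def[abs_def] .
  moreover have "(\<lambda>h. R * ((fst z * fst h + snd z * snd h) / R * ramp_d (Mw z / R)))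
      = (\<lambda>h. Mw_trunc_dx R z * fst h + Mw_trunc_dv R z * snd h)"
    using R by (auto simp: fun_eq_iff Mw_trunc_dx_def Mw_trunc_dv_def field_simps)
  ultimately show "(Mw_trunc R has_derivative
      (\<lambda>h. Mw_trunc_dx R z * fst h + Mw_trunc_dv R z * snd h)) (at z)"
    by simp
next
  fix x v :: real
  have "((\<lambda>w. Mw (x, w) / R) has_real_derivative v / R) (at v)"
    unfolding Mw_def using R by (auto intro!: derivative_eq_intros)
  from DERIV_mult[OF DERIV_chain2[OF ramp_d_has_derivative this] DERIV_ident]
  show "((\<lambda>w. Mw_trunc_dv R (x, w)) has_real_derivative Mw_trunc_dvv R (x, v)) (at v)"
    by (simp add: Mw_trunc_dv_def Mw_trunc_dvv_def power2_eq_square mult.assoc)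
next
  have "continuous_on UNIV (\<lambda>z. g (Mw z / R))" if "continuous_on UNIV g" for g
    by (rule continuous_on_compose2[OF that]) (use R in \<open>auto intro!: continuous_intros continuous_on_Mw\<close>)
  then show "continuous_on UNIV (Mw_trunc_dx R)" "continuous_on UNIV (Mw_trunc_dv R)"
      "continuous_on UNIV (Mw_trunc_dvv R)"
    unfolding Mw_trunc_dx_def[abs_def] Mw_trunc_dv_def[abs_def] Mw_trunc_dvv_def[abs_def]
    using continuous_on_ramp_d continuous_on_ramp_dd R by (auto intro!: continuous_intros)
next
  have "{z. Mw_trunc R z \<noteq> 0} \<subseteq> {z. Mw z \<le> 2 * R}"
    using ramp_eq_0[of "Mw _ / R"] R by (force simp: Mw_trunc_def field_simps)
  then have "closure {z. Mw_trunc R z \<noteq> 0} \<subseteq> {z. Mw z \<le> 2 * R}"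
    using compact_Mw_sublevel by (meson closure_minimal compact_imp_closed)
  then show "compact (closure {z. Mw_trunc R z \<noteq> 0})"
    by (metis closed_closure compact_Int_closed compact_Mw_sublevel inf.absorb_iff2)
qed

lemma borel_measurable_Mw_trunc [measurable]: "Mw_trunc R \<in> borel_measurable borel"
  unfolding Mw_trunc_def[abs_def] by measurable

lemma Mw_trunc_eq_Mw: "0 < R \<Longrightarrow> Mw z \<le> R \<Longrightarrow> Mw_trunc R z = Mw z"
  using ramp_eq_id[of "Mw z / R"] by (simp add: Mw_trunc_def field_simps)

lemma Mw_trunc_tendsto: "(\<lambda>n. Mw_trunc (Suc n) z) \<longlonglongrightarrow> Mw z"
proof (rule tendsto_eventually)
  obtain N :: nat where "Mw z \<le> real N" using real_arch_simple by blast
  then show "\<forall>\<^sub>F n in sequentially. Mw_trunc (Suc n) z = Mw z"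
    unfolding eventually_sequentially by (auto intro!: exI[of _ N] Mw_trunc_eq_Mw)
qed

lemma Mw_trunc_bounds:
  assumes R: "0 < R"
  shows "0 \<le> Mw_trunc R z" "Mw_trunc R z \<le> Mw z" "Mw_trunc R z \<le> 2 * R"
proof -
  have M: "0 \<le> Mw z / R" using Mw_ge_1[of z] R by simp
  show "0 \<le> Mw_trunc R z" unfolding Mw_trunc_def using ramp_nonneg[OF M] R by simp
  show "Mw_trunc R z \<le> Mw z"
    using mult_left_mono[OF ramp_le[OF M], of R] R by (simp add: Mw_trunc_def)
  show "Mw_trunc R z \<le> 2 * R"
  proof (cases "Mw z / R > 2")
    case False
    then have "ramp (Mw z / R) \<le> 2" using ramp_le[OF M] by linarith
    then show ?thesis using R by (simp add: Mw_trunc_def)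
  qed (use ramp_eq_0 R in \<open>simp add: Mw_trunc_def\<close>)
qed

definition moment_wt :: "real \<times> real \<Rightarrow> real" where
  "moment_wt z = 1 + (fst z)^2 + (snd z)^4"

lemma borel_measurable_moment_wt [measurable]: "moment_wt \<in> borel_measurable borel"
  unfolding moment_wt_def[abs_def] by (intro borel_measurable_continuous_onI continuous_intros)

lemma moment_wt_bounds:
  "1 \<le> moment_wt z" "Mw z \<le> 2 * moment_wt z" "\<bar>snd z\<bar> \<le> moment_wt z"
  "(snd z)^2 \<le> moment_wt z" "\<bar>snd z\<bar>^3 \<le> 2 * moment_wt z" "\<bar>fst z * snd z\<bar> \<le> moment_wt z"
proof -
  obtain x v where z: "z = (x, v)" by fastforce
  have sq: "0 \<le> (v^2 - 1)^2" "0 \<le> (\<bar>v\<bar> - 1)^2" "0 \<le> (\<bar>x\<bar> - \<bar>v\<bar>)^2" "0 \<le> v^4" "0 \<le> x^2" "0 \<le> v^2"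
    by simp_all
  then have v2: "2 * v^2 \<le> 1 + v^4" and v1: "2 * \<bar>v\<bar> \<le> 1 + v^2"
    and xv: "2 * \<bar>x * v\<bar> \<le> x^2 + v^2"
    by (simp_all add: power2_eq_square eval_nat_numeral algebra_simps abs_mult abs_mult_self_eq)
  have cube: "\<bar>v\<bar>^3 = \<bar>v\<bar> * v^2"
    by (simp add: power3_eq_cube power2_eq_square abs_mult_self_eq)
  have "\<bar>v\<bar>^3 \<le> v^2 + v^4"
  proof (cases "\<bar>v\<bar> \<le> 1")
    case True
    then have "\<bar>v\<bar> * v^2 \<le> 1 * v^2" by (intro mult_right_mono) auto
    then show ?thesis using sq cube by linarith
  next
    case False
    then have "\<bar>v\<bar> * v^2 \<le> \<bar>v\<bar> * v^2 * \<bar>v\<bar>" by (simp add: mult_le_cancel_left1 not_less)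
    also have "\<dots> = v^4" by (simp add: eval_nat_numeral abs_mult_self_eq algebra_simps)
    finally show ?thesis using sq cube by linarith
  qed
  then show "1 \<le> moment_wt z" "Mw z \<le> 2 * moment_wt z" "\<bar>snd z\<bar> \<le> moment_wt z"
    "(snd z)^2 \<le> moment_wt z" "\<bar>snd z\<bar>^3 \<le> 2 * moment_wt z" "\<bar>fst z * snd z\<bar> \<le> moment_wt z"
    using v1 v2 xv sq(4-6) unfolding z moment_wt_def Mw_def fst_conv snd_conv distrib_left
    by - linarith+
qed

text \<open>\<open>gen_Mw \<dots> j\<close> is the adjoint operator \<open>Q_\<epsilon>[j]\<^sup>*\<close> applied to the weight \<open>Mw\<close>.\<close>

definition gen_Mw :: "real \<Rightarrow> real \<Rightarrow> real \<Rightarrow> real \<Rightarrow> real \<Rightarrow> real \<Rightarrow> real \<times> real \<Rightarrow> real" where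
  "gen_Mw a b lam I0 eps j z = - Acoef a b z * fst z - Bcoef lam I0 eps j z * snd z + 1"

lemma gen_Mw_shift: "gen_Mw a b lam I0 eps j z = gen_Mw a b lam I0 eps 0 z - eps * j * snd z"
  by (simp add: gen_Mw_def Bcoef_def algebra_simps)

lemma gen_Mw_expand:
  "gen_Mw a b lam I0 eps 0 (x, v) = - a * x^2 + (b - 1) * (x * v) - v^4 + (1 + lam) * v^3
     - lam * v^2 + eps * v^2 - I0 * v + 1"
  by (simp add: gen_Mw_def Acoef_def Bcoef_def algebra_simps power2_eq_square power3_eq_cube
      eval_nat_numeral)

lemma borel_measurable_gen_Mw [measurable]: "gen_Mw a b lam I0 eps j \<in> borel_measurable borel"
  unfolding gen_Mw_def[abs_def] Acoef_def Bcoef_def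
  by (intro borel_measurable_continuous_onI continuous_intros)

lemma Mw_trunc_generator:
  "- Acoef a b z * Mw_trunc_dx R z - Bcoef lam I0 eps j z * Mw_trunc_dv R z + Mw_trunc_dvv R z
     = ramp_d (Mw z / R) * gen_Mw a b lam I0 eps j z + ramp_dd (Mw z / R) / R * (snd z)^2"
  by (simp add: Mw_trunc_dx_def Mw_trunc_dv_def Mw_trunc_dvv_def gen_Mw_def algebra_simps)

definition dissipation_const :: "real \<Rightarrow> real \<Rightarrow> real \<Rightarrow> real \<Rightarrow> real \<Rightarrow> real" where
  "dissipation_const a b lam I0 eps0 =
     (a/2 + \<bar>lam\<bar> + eps0 + (b - 1)^2 / (2 * a) + (1 + lam)^2 + 1/2)^2 / 3 + I0^2 / 2 + 1 + a"

definition growth_const :: "real \<Rightarrow> real \<Rightarrow> real \<Rightarrow> real \<Rightarrow> real \<Rightarrow> real" where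
  "growth_const a b lam I0 eps0 = a + \<bar>b\<bar> + 5 + 3 * \<bar>lam\<bar> + eps0 + \<bar>I0\<bar>"

lemma dissipation_const_pos: "0 < a \<Longrightarrow> 0 < dissipation_const a b lam I0 eps0"
  unfolding dissipation_const_def by (smt (verit) zero_le_power2 divide_nonneg_nonneg)

text \<open>By Young's inequality the mixed term \<open>(b - 1) x v\<close> costs half of \<open>-a x\<^sup>2\<close>, and \<open>-v\<^sup>4\<close> absorbs
  all other terms.\<close>

lemma gen_Mw_le_dissipation:
  assumes a: "0 < a" and eps: "0 \<le> eps" "eps \<le> eps0"
  shows "gen_Mw a b lam I0 eps 0 z \<le> dissipation_const a b lam I0 eps0 - a * Mw z"
proof -
  obtain x v where z: "z = (x, v)" by fastforce
  define d where "d = a/2 + \<bar>lam\<bar> + eps0 + (b - 1)^2 / (2 * a) + (1 + lam)^2 + 1/2"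
  have xv: "(b - 1) * (x * v) \<le> a * x^2 / 2 + ((b - 1)^2 / (2 * a)) * v^2"
  proof -
    have "0 \<le> (a * x - (b - 1) * v)^2 / (2 * a)" using a by simp
    also have "\<dots> = a * x^2 / 2 - (b - 1) * (x * v) + ((b - 1)^2 / (2 * a)) * v^2"
      using a by (simp add: power2_eq_square field_simps)
    finally show ?thesis by linarith
  qed
  have v3: "(1 + lam) * v^3 \<le> v^4 / 4 + (1 + lam)^2 * v^2"
  proof -
    have "0 \<le> (v^2 / 2 - (1 + lam) * v)^2" by simp
    also have "\<dots> = v^4 / 4 - (1 + lam) * v^3 + (1 + lam)^2 * v^2"
      by (simp add: power2_eq_square power3_eq_cube eval_nat_numeral algebra_simps)
    finally show ?thesis by linarith
  qed
  have v1: "- I0 * v \<le> v^2 / 2 + I0^2 / 2"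
    using zero_le_power2[of "v + I0"] by (simp add: power2_eq_square algebra_simps)
  have v2: "- lam * v^2 \<le> \<bar>lam\<bar> * v^2" "eps * v^2 \<le> eps0 * v^2"
    using eps mult_right_mono[OF abs_ge_minus_self[of lam], of "v^2"] by (simp_all add: mult_right_mono)
  have v4: "- 3/4 * v^4 + d * v^2 \<le> d^2 / 3"
  proof -
    have "0 \<le> 3/4 * (v^2 - 2 * d / 3)^2" by simp
    also have "\<dots> = 3/4 * v^4 - d * v^2 + d^2 / 3"
      by (simp add: power2_eq_square eval_nat_numeral algebra_simps)
    finally show ?thesis by linarith
  qed
  have "d * v^2 = a/2 * v^2 + \<bar>lam\<bar> * v^2 + eps0 * v^2 + ((b - 1)^2 / (2 * a)) * v^2
      + (1 + lam)^2 * v^2 + 1/2 * v^2"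
    by (simp add: d_def algebra_simps)
  moreover have "dissipation_const a b lam I0 eps0 - a * Mw z
      = d^2 / 3 + I0^2 / 2 + 1 - a * x^2 / 2 - a/2 * v^2"
    by (simp add: dissipation_const_def d_def z Mw_def algebra_simps)
  ultimately show ?thesis
    unfolding z gen_Mw_expand using xv v1 v2 v3 v4 by linarith
qed

lemma abs_gen_Mw_le:
  assumes a: "0 < a" and eps: "0 \<le> eps" "eps \<le> eps0"
  shows "\<bar>gen_Mw a b lam I0 eps 0 z\<bar> \<le> growth_const a b lam I0 eps0 * moment_wt z"
proof -
  obtain x v where z: "z = (x, v)" by fastforce
  define W where "W = moment_wt (x, v)"
  note w = moment_wt_bounds[of "(x, v)", unfolded fst_conv snd_conv, folded W_def]
  have x2: "x^2 \<le> W" and v4: "0 \<le> v^4" "v^4 \<le> W"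
    by (simp_all add: W_def moment_wt_def)
  have prod: "\<bar>c * y\<bar> \<le> C * Y" if "\<bar>c\<bar> \<le> C" "\<bar>y\<bar> \<le> Y" for c y C Y :: real
    using that by (simp add: abs_mult mult_mono')
  have "\<bar>(b - 1) * (x * v)\<bar> \<le> (\<bar>b\<bar> + 1) * W"
    using w(6) by (intro prod) auto
  moreover have "\<bar>(1 + lam) * v^3\<bar> \<le> (1 + \<bar>lam\<bar>) * (2 * W)"
    using w(5) by (intro prod) (auto simp: power_abs)
  ultimately have t: "\<bar>(b - 1) * (x * v)\<bar> \<le> \<bar>b\<bar> * W + W"
    "\<bar>(1 + lam) * v^3\<bar> \<le> 2 * W + 2 * (\<bar>lam\<bar> * W)"
    by (simp_all add: algebra_simps)
  have t': "\<bar>lam * v^2\<bar> \<le> \<bar>lam\<bar> * W" "\<bar>eps * v^2\<bar> \<le> eps0 * W"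
    "\<bar>I0 * v\<bar> \<le> \<bar>I0\<bar> * W" "\<bar>a * x^2\<bar> \<le> a * W"
    using w(3,4) x2 eps a by (intro prod; simp)+
  have K: "growth_const a b lam I0 eps0 * W
      = a * W + \<bar>b\<bar> * W + 5 * W + 3 * (\<bar>lam\<bar> * W) + eps0 * W + \<bar>I0\<bar> * W"
    by (simp add: growth_const_def algebra_simps)
  have neg: "- a * x^2 = - (a * x^2)" by simp
  note bounds = t[THEN abs_le_D1] t[THEN abs_le_D2] t'[THEN abs_le_D1] t'[THEN abs_le_D2] v4 w(1)
  have "gen_Mw a b lam I0 eps 0 (x, v) \<le> growth_const a b lam I0 eps0 * W"
    unfolding gen_Mw_expand K neg using bounds by linarith
  moreover have "- gen_Mw a b lam I0 eps 0 (x, v) \<le> growth_const a b lam I0 eps0 * W"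
    unfolding gen_Mw_expand K neg using bounds by linarith
  ultimately show ?thesis
    unfolding z W_def by (rule abs_leI)
qed

section \<open>Moment estimate for a weak solution\<close>

locale fhn_solution =
  fixes a b lam I0 eps0 eps :: real and f :: "real \<Rightarrow> real \<times> real \<Rightarrow> real"
  assumes a_pos: "0 < a" and eps: "0 \<le> eps" "eps < eps0"
    and solution: "is_solution a b lam I0 eps f"
    and initial_moment: "in_L1M (f 0)"
begin

lemma f_nonneg: "0 \<le> t \<Longrightarrow> 0 \<le> f t z"
  using solution by (cases z) (auto simp: is_solution_def prob_density_def)

lemma integrable_f: "0 \<le> t \<Longrightarrow> integrable lborel (f t)"
  and integral_f: "0 \<le> t \<Longrightarrow> (\<integral>z. f t z \<partial>lborel) = 1"
  using solution by (auto simp: is_solution_def prob_density_def)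

lemma borel_measurable_f_joint [measurable]:
  "(\<lambda>x. f (fst x) (snd x)) \<in> borel_measurable (lborel \<Otimes>\<^sub>M lborel)"
  using solution by (simp add: is_solution_def lborel_prod case_prod_beta')

lemma borel_measurable_f [measurable]: "f s \<in> borel_measurable lborel"
  using measurable_Pair2[OF borel_measurable_f_joint, of s] by simp

lemma borel_measurable_Jf [measurable]: "(\<lambda>s. Jf (f s)) \<in> borel_measurable lborel"
proof -
  have "(\<lambda>x. snd (snd x) * f (fst x) (snd x)) \<in> borel_measurable (lborel \<Otimes>\<^sub>M lborel)"
    by measurable
  then show ?thesis
    unfolding Jf_def by (rule lborel.borel_measurable_lebesgue_integral[unfolded split_beta'])
qed

definition gen :: "real \<Rightarrow> real \<times> real \<Rightarrow> real" where
  "gen s = gen_Mw a b lam I0 eps (Jf (f s))"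

definition gen_trunc :: "real \<Rightarrow> real \<Rightarrow> real \<times> real \<Rightarrow> real" where
  "gen_trunc R s z = ramp_d (Mw z / R) * gen s z + ramp_dd (Mw z / R) / R * (snd z)^2"

definition moment :: "real \<Rightarrow> real" where
  "moment t = (\<integral>z. f t z * Mw z \<partial>lborel)"

definition moment_rate :: "real \<Rightarrow> real" where
  "moment_rate s = (\<integral>z. f s z * gen s z \<partial>lborel)"

definition trunc_rate :: "real \<Rightarrow> real \<Rightarrow> real" where
  "trunc_rate R s = (\<integral>z. f s z * gen_trunc R s z \<partial>lborel)"

definition wt_moment :: "real \<Rightarrow> real" where
  "wt_moment s = (\<integral>z. moment_wt z * f s z \<partial>lborel)"

definition has_wt_moment :: "real \<Rightarrow> bool" where
  "has_wt_moment s \<longleftrightarrow> 0 \<le> s \<and> integrable lborel (\<lambda>z. moment_wt z * f s z)"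

lemma gen_eq: "gen s z = gen_Mw a b lam I0 eps 0 z - eps * Jf (f s) * snd z"
  unfolding gen_def by (rule gen_Mw_shift)

lemma borel_measurable_gen [measurable]:
  "(\<lambda>x. gen (fst x) (snd x)) \<in> borel_measurable (lborel \<Otimes>\<^sub>M lborel)"
  unfolding gen_eq by measurable

lemma borel_measurable_gen_trunc [measurable]:
  "(\<lambda>x. gen_trunc R (fst x) (snd x)) \<in> borel_measurable (lborel \<Otimes>\<^sub>M lborel)"
  unfolding gen_trunc_def by measurable

lemma weak_form_Mw_trunc:
  assumes "0 \<le> t" "0 < R"
  shows "(\<integral>z. Mw_trunc R z * f t z \<partial>lborel)
     = (\<integral>z. Mw_trunc R z * f 0 z \<partial>lborel) + (\<integral>s\<in>{0..t}. trunc_rate R s \<partial>lborel)"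
proof -
  have "(\<integral>z. Mw_trunc R z * f t z \<partial>lborel) = (\<integral>z. Mw_trunc R z * f 0 z \<partial>lborel)
      + (\<integral>s\<in>{0..t}. (\<integral>z. f s z * (- Acoef a b z * Mw_trunc_dx R z
          - Bcoef lam I0 eps (Jf (f s)) z * Mw_trunc_dv R z + Mw_trunc_dvv R z) \<partial>lborel) \<partial>lborel)"
    using solution test_fun_Mw_trunc[OF assms(2)] assms(1) unfolding is_solution_def by blast
  then show ?thesis
    unfolding trunc_rate_def gen_trunc_def gen_def Mw_trunc_generator[symmetric] .
qed

lemma integrable_wt_f_joint:
  assumes "0 \<le> T"
  shows "integrable (lborel \<Otimes>\<^sub>M lborel)
    (\<lambda>x. indicator ({0..T} \<times> UNIV) x * (moment_wt (snd x) * f (fst x) (snd x)))"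
  using solution assms unfolding is_solution_def set_integrable_def
  by (simp add: lborel_prod moment_wt_def case_prod_beta')

lemma set_integrable_wt_moment:
  assumes T: "0 \<le> T"
  shows "set_integrable lborel {0..T} wt_moment"
proof -
  have "integrable lborel (\<lambda>s. \<integral>z. indicator ({0..T} \<times> UNIV) (s, z) * (moment_wt z * f s z) \<partial>lborel)"
    using lborel_pair.integrable_fst'[OF integrable_wt_f_joint[OF T]] by simp
  moreover have "(\<integral>z. indicator ({0..T} \<times> UNIV) (s, z) * (moment_wt z * f s z) \<partial>lborel)
      = indicator {0..T} s * wt_moment s" for s
    by (auto simp: wt_moment_def indicator_def)
  ultimately show ?thesis
    unfolding set_integrable_def by simp
qed

lemma AE_has_wt_moment: "AE s in lborel. 0 \<le> s \<longrightarrow> has_wt_moment s"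
proof -
  have "AE s in lborel. \<forall>n::nat.
      integrable lborel (\<lambda>z. indicator ({0..real n} \<times> UNIV) (s, z) * (moment_wt z * f s z))"
    unfolding AE_all_countable
    by (intro allI lborel_pair.AE_integrable_fst'[OF integrable_wt_f_joint, simplified]) simp
  then show ?thesis
  proof (rule eventually_mono, intro impI)
    fix s :: real
    assume s: "0 \<le> s" and int: "\<forall>n::nat.
      integrable lborel (\<lambda>z. indicator ({0..real n} \<times> UNIV) (s, z) * (moment_wt z * f s z))"
    obtain n :: nat where n: "s \<le> real n" using real_arch_simple by blast
    have "(\<lambda>z. indicator ({0..real n} \<times> UNIV) (s, z) * (moment_wt z * f s z))
        = (\<lambda>z. moment_wt z * f s z)"
      using s n by (auto simp: indicator_def)
    with int s show "has_wt_moment s"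
      unfolding has_wt_moment_def by (metis (no_types))
  qed
qed

lemma integrable_f_mult:
  assumes s: "has_wt_moment s" and h [measurable]: "h \<in> borel_measurable borel"
    and h_le: "\<And>z. \<bar>h z\<bar> \<le> C * moment_wt z"
  shows "integrable lborel (\<lambda>z. f s z * h z)"
proof (rule Bochner_Integration.integrable_bound)
  show "integrable lborel (\<lambda>z. C * (moment_wt z * f s z))"
    using s by (simp add: has_wt_moment_def)
  have "\<bar>f s z * h z\<bar> \<le> \<bar>C * (moment_wt z * f s z)\<bar>" for z
  proof -
    have f: "0 \<le> f s z" using s f_nonneg by (simp add: has_wt_moment_def)
    then have "\<bar>f s z * h z\<bar> \<le> f s z * (C * moment_wt z)"
      using h_le by (simp add: abs_mult mult_left_mono)
    then show ?thesis by (simp add: algebra_simps)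
  qed
  then show "AE z in lborel. norm (f s z * h z) \<le> norm (C * (moment_wt z * f s z))"
    by simp
qed measurable

text \<open>The constants bound \<open>ramp_d\<close> by 186 and \<open>ramp_dd (M/R) v\<^sup>2 / R\<close> by \<open>552 \<cdot> 4\<close>, as \<open>v\<^sup>2 \<le> 4 R\<close>
  where \<open>ramp_dd (M/R) \<noteq> 0\<close>.\<close>

definition gen_dom :: "real \<Rightarrow> real \<times> real \<Rightarrow> real" where
  "gen_dom s z = 186 * (growth_const a b lam I0 eps0 * moment_wt z + eps * \<bar>Jf (f s)\<bar> * \<bar>snd z\<bar>)
     + 2208 * moment_wt z"

definition rate_const :: real where
  "rate_const = 186 * growth_const a b lam I0 eps0 + 186 * eps0 + 2208"

lemma abs_gen_le: "\<bar>gen s z\<bar> \<le> growth_const a b lam I0 eps0 * moment_wt z + eps * \<bar>Jf (f s)\<bar> * \<bar>snd z\<bar>"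
proof -
  have "\<bar>gen s z\<bar> \<le> \<bar>gen_Mw a b lam I0 eps 0 z\<bar> + \<bar>eps * Jf (f s) * snd z\<bar>"
    unfolding gen_eq by (rule abs_triangle_ineq4)
  then show ?thesis
    using abs_gen_Mw_le[OF a_pos eps(1), of eps0 b lam I0 z] eps by (simp add: abs_mult)
qed

lemma abs_gen_le_dom: "\<bar>gen s z\<bar> \<le> gen_dom s z"
proof -
  define X where "X = growth_const a b lam I0 eps0 * moment_wt z + eps * \<bar>Jf (f s)\<bar> * \<bar>snd z\<bar>"
  show ?thesis
    using abs_gen_le[of s z, folded X_def] abs_ge_zero[of "gen s z"] moment_wt_bounds(1)[of z]
    unfolding gen_dom_def X_def[symmetric] by linarith
qed

lemma abs_gen_trunc_le_dom:
  assumes R: "0 < R"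
  shows "\<bar>gen_trunc R s z\<bar> \<le> gen_dom s z"
proof -
  have "\<bar>gen_trunc R s z\<bar>
      \<le> \<bar>ramp_d (Mw z / R) * gen s z\<bar> + \<bar>ramp_dd (Mw z / R) / R * (snd z)^2\<bar>"
    unfolding gen_trunc_def by (rule abs_triangle_ineq)
  also have "\<dots> \<le> 186 * \<bar>gen s z\<bar> + 2208 * moment_wt z"
  proof (rule add_mono)
    show "\<bar>ramp_d (Mw z / R) * gen s z\<bar> \<le> 186 * \<bar>gen s z\<bar>"
      unfolding abs_mult by (rule mult_right_mono[OF abs_ramp_d_le]) simp
    show "\<bar>ramp_dd (Mw z / R) / R * (snd z)^2\<bar> \<le> 2208 * moment_wt z"
    proof (cases "Mw z / R \<le> 2")
      case True
      then have "Mw z \<le> 2 * R"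
        using R by (simp add: field_simps)
      then have "(snd z)^2 \<le> 4 * R"
        using zero_le_power2[of "fst z"] unfolding Mw_def by linarith
      then have "(snd z)^2 / R \<le> 4"
        using R by (simp add: field_simps)
      then have "\<bar>ramp_dd (Mw z / R)\<bar> * ((snd z)^2 / R) \<le> 552 * 4"
        by (intro mult_mono abs_ramp_dd_le) (use R in auto)
      then show ?thesis
        using R moment_wt_bounds(1)[of z] by (simp add: abs_mult)
    qed (use ramp_eq_0 moment_wt_bounds(1)[of z] in auto)
  qed
  also have "\<dots> \<le> gen_dom s z"
    unfolding gen_dom_def using abs_gen_le[of s z] by simp
  finally show ?thesis .
qed

lemma wt_moment_nonneg: "has_wt_moment s \<Longrightarrow> 0 \<le> wt_moment s"
  unfolding wt_moment_def has_wt_moment_def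
  using moment_wt_bounds(1) f_nonneg by (intro integral_nonneg_AE AE_I2) (simp add: order_trans[OF zero_le_one])

lemma abs_Jf_mult_le_wt_moment:
  assumes s: "has_wt_moment s"
  shows "\<bar>Jf (f s)\<bar> * (\<integral>z. f s z * \<bar>snd z\<bar> \<partial>lborel) \<le> wt_moment s"
proof -
  define c where "c = (\<integral>z. f s z * \<bar>snd z\<bar> \<partial>lborel)"
  have s0: "0 \<le> s" and f: "\<And>z. 0 \<le> f s z"
    using s f_nonneg by (auto simp: has_wt_moment_def)
  have int_v: "integrable lborel (\<lambda>z. f s z * \<bar>snd z\<bar>)"
    and int_v2: "integrable lborel (\<lambda>z. f s z * \<bar>snd z\<bar>^2)"
    using moment_wt_bounds(3,4) by (auto intro!: integrable_f_mult[OF s, where C=1])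
  have "\<bar>Jf (f s)\<bar> \<le> (\<integral>z. norm (snd z * f s z) \<partial>lborel)"
    unfolding Jf_def real_norm_def[symmetric] by (rule integral_norm_bound)
  also have "\<dots> = c"
    unfolding c_def using f by (intro Bochner_Integration.integral_cong) (auto simp: abs_mult)
  finally have jc: "\<bar>Jf (f s)\<bar> * c \<le> c * c"
    using f by (intro mult_right_mono) (auto simp: c_def)
  have "c * c \<le> (\<integral>z. f s z * \<bar>snd z\<bar>^2 \<partial>lborel)"
    using square_integral_le_integral_square[OF f integrable_f[OF s0] integral_f[OF s0] int_v int_v2]
    by (simp add: c_def power2_eq_square)
  also have "\<dots> \<le> wt_moment s"
  proof -
    have "f s z * \<bar>snd z\<bar>^2 \<le> moment_wt z * f s z" for z
      using mult_left_mono[OF moment_wt_bounds(4) f, of z] by (simp add: mult.commute)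
    then show ?thesis
      unfolding wt_moment_def using int_v2 s by (intro integral_mono) (auto simp: has_wt_moment_def)
  qed
  finally show ?thesis using jc unfolding c_def by linarith
qed

lemma integrable_f_gen_dom:
  assumes s: "has_wt_moment s"
  shows "integrable lborel (\<lambda>z. f s z * gen_dom s z)"
proof -
  have "\<bar>gen_dom s z\<bar> \<le> (186 * growth_const a b lam I0 eps0 + 2208 + 186 * eps * \<bar>Jf (f s)\<bar>) * moment_wt z" for z
  proof -
    have "0 \<le> gen_dom s z" using abs_gen_le_dom[of s z] by linarith
    moreover have "eps * \<bar>Jf (f s)\<bar> * \<bar>snd z\<bar> \<le> eps * \<bar>Jf (f s)\<bar> * moment_wt z"
      using moment_wt_bounds(3)[of z] eps by (intro mult_left_mono) auto
    ultimately show ?thesis unfolding gen_dom_def by (simp add: algebra_simps)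
  qed
  then show ?thesis
    by (intro integrable_f_mult[OF s]) (simp_all add: gen_dom_def)
qed

lemma integral_f_gen_dom_le:
  assumes s: "has_wt_moment s"
  shows "(\<integral>z. f s z * gen_dom s z \<partial>lborel) \<le> rate_const * wt_moment s"
proof -
  define K where "K = 186 * growth_const a b lam I0 eps0 + 2208"
  define c where "c = (\<integral>z. f s z * \<bar>snd z\<bar> \<partial>lborel)"
  have int_wt: "integrable lborel (\<lambda>z. moment_wt z * f s z)"
    using s by (simp add: has_wt_moment_def)
  have int_v: "integrable lborel (\<lambda>z. f s z * \<bar>snd z\<bar>)"
    using moment_wt_bounds(3) by (auto intro!: integrable_f_mult[OF s, where C=1])
  have "f s z * gen_dom s z = K * (moment_wt z * f s z) + (186 * eps * \<bar>Jf (f s)\<bar>) * (f s z * \<bar>snd z\<bar>)"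
    for z by (simp add: gen_dom_def K_def algebra_simps)
  then have "(\<integral>z. f s z * gen_dom s z \<partial>lborel) = K * wt_moment s + 186 * eps * (\<bar>Jf (f s)\<bar> * c)"
    using int_wt int_v by (simp add: wt_moment_def c_def)
  also have "\<dots> \<le> K * wt_moment s + 186 * eps0 * wt_moment s"
    using abs_Jf_mult_le_wt_moment[OF s] wt_moment_nonneg[OF s] eps s f_nonneg
    by (intro add_left_mono mult_mono) (auto simp: c_def has_wt_moment_def intro!: integral_nonneg_AE)
  also have "\<dots> = rate_const * wt_moment s"
    by (simp add: K_def rate_const_def algebra_simps)
  finally show ?thesis .
qed

lemma integral_dominated_le:
  assumes s: "has_wt_moment s" and g [measurable]: "g \<in> borel_measurable lborel"
    and g_le: "\<And>z. \<bar>g z\<bar> \<le> gen_dom s z"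
  shows "integrable lborel (\<lambda>z. f s z * g z)"
    and "\<bar>\<integral>z. f s z * g z \<partial>lborel\<bar> \<le> rate_const * wt_moment s"
proof -
  have f: "\<And>z. 0 \<le> f s z"
    using s f_nonneg by (auto simp: has_wt_moment_def)
  note int_dom = integrable_f_gen_dom[OF s]
  show int: "integrable lborel (\<lambda>z. f s z * g z)"
  proof (rule Bochner_Integration.integrable_bound[OF int_dom])
    show "AE z in lborel. norm (f s z * g z) \<le> norm (f s z * gen_dom s z)"
      using f g_le by (intro AE_I2) (simp add: abs_mult mult_left_mono order_trans[OF _ abs_ge_self])
  qed measurable
  have "\<bar>\<integral>z. f s z * g z \<partial>lborel\<bar> \<le> (\<integral>z. \<bar>f s z * g z\<bar> \<partial>lborel)"
    using integral_norm_bound[of lborel "\<lambda>z. f s z * g z"] by simp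
  also have "\<dots> \<le> (\<integral>z. f s z * gen_dom s z \<partial>lborel)"
    using f g_le by (intro integral_mono integrable_abs int int_dom) (auto simp: abs_mult mult_left_mono)
  also have "\<dots> \<le> rate_const * wt_moment s"
    by (rule integral_f_gen_dom_le[OF s])
  finally show "\<bar>\<integral>z. f s z * g z \<partial>lborel\<bar> \<le> rate_const * wt_moment s" .
qed

lemma borel_measurable_gen_section [measurable]: "gen s \<in> borel_measurable lborel"
  and borel_measurable_gen_trunc_section [measurable]: "gen_trunc R s \<in> borel_measurable lborel"
  using measurable_Pair2[OF borel_measurable_gen, of s] measurable_Pair2[OF borel_measurable_gen_trunc, of s]
  by simp_all

lemma borel_measurable_moment_rate [measurable]: "moment_rate \<in> borel_measurable lborel"
  and borel_measurable_trunc_rate [measurable]: "trunc_rate R \<in> borel_measurable lborel"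
  unfolding moment_rate_def[abs_def] trunc_rate_def[abs_def]
  by (rule lborel.borel_measurable_lebesgue_integral[unfolded split_beta'], measurable)+

lemma abs_moment_rate_le:
  "has_wt_moment s \<Longrightarrow> \<bar>moment_rate s\<bar> \<le> rate_const * wt_moment s"
  unfolding moment_rate_def by (intro integral_dominated_le abs_gen_le_dom) simp_all

lemma abs_trunc_rate_le:
  "has_wt_moment s \<Longrightarrow> 0 < R \<Longrightarrow> \<bar>trunc_rate R s\<bar> \<le> rate_const * wt_moment s"
  unfolding trunc_rate_def by (intro integral_dominated_le abs_gen_trunc_le_dom) simp_all

lemma gen_trunc_eq_gen: "0 < R \<Longrightarrow> Mw z \<le> R \<Longrightarrow> gen_trunc R s z = gen s z"
  using ramp_eq_id[of "Mw z / R"] by (simp add: gen_trunc_def)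

lemma gen_trunc_tendsto: "(\<lambda>n. gen_trunc (Suc n) s z) \<longlonglongrightarrow> gen s z"
proof (rule tendsto_eventually)
  obtain N :: nat where "Mw z \<le> real N" using real_arch_simple by blast
  then show "\<forall>\<^sub>F n in sequentially. gen_trunc (Suc n) s z = gen s z"
    unfolding eventually_sequentially by (auto intro!: exI[of _ N] gen_trunc_eq_gen)
qed

lemma trunc_rate_tendsto:
  assumes s: "has_wt_moment s"
  shows "(\<lambda>n. trunc_rate (Suc n) s) \<longlonglongrightarrow> moment_rate s"
  unfolding trunc_rate_def moment_rate_def
proof (rule integral_dominated_convergence[where w="\<lambda>z. f s z * gen_dom s z"])
  show "integrable lborel (\<lambda>z. f s z * gen_dom s z)"
    by (rule integrable_f_gen_dom[OF s])
  show "AE z in lborel. norm (f s z * gen_trunc (Suc n) s z) \<le> f s z * gen_dom s z" for n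
    using s f_nonneg abs_gen_trunc_le_dom[of "Suc n" s]
    by (intro AE_I2) (simp add: has_wt_moment_def abs_mult mult_left_mono)
  show "AE z in lborel. (\<lambda>n. f s z * gen_trunc (Suc n) s z) \<longlonglongrightarrow> f s z * gen s z"
    by (intro AE_I2 tendsto_mult_left gen_trunc_tendsto)
qed simp_all

lemma moment_rate_le:
  assumes s: "has_wt_moment s"
  shows "moment_rate s \<le> dissipation_const a b lam I0 eps0 - a * moment s"
proof -
  define C where "C = dissipation_const a b lam I0 eps0"
  have s0: "0 \<le> s" and f: "\<And>z. 0 \<le> f s z"
    using s f_nonneg by (auto simp: has_wt_moment_def)
  have int_gen: "integrable lborel (\<lambda>z. f s z * gen_Mw a b lam I0 eps 0 z)"
    using abs_gen_Mw_le[OF a_pos eps(1) less_imp_le[OF eps(2)]] by (intro integrable_f_mult[OF s]) simp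
  have int_v: "integrable lborel (\<lambda>z. f s z * snd z)"
    using moment_wt_bounds(3) by (intro integrable_f_mult[OF s, where C=1]) auto
  have int_Mw: "integrable lborel (\<lambda>z. f s z * Mw z)"
    using moment_wt_bounds(2) by (intro integrable_f_mult[OF s, where C=2])
      (simp_all add: abs_of_nonneg[OF order_trans[OF zero_le_one Mw_ge_1]])
  note int = int_gen int_v int_Mw
  have "moment_rate s = (\<integral>z. f s z * gen_Mw a b lam I0 eps 0 z
      - (eps * Jf (f s)) * (f s z * snd z) \<partial>lborel)"
    unfolding moment_rate_def gen_eq by (simp add: algebra_simps)
  also have "\<dots> = (\<integral>z. f s z * gen_Mw a b lam I0 eps 0 z \<partial>lborel) - eps * Jf (f s) * Jf (f s)"
    using int by (simp add: Jf_def mult.commute)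
  also have "\<dots> \<le> (\<integral>z. f s z * gen_Mw a b lam I0 eps 0 z \<partial>lborel)"
    using eps by (simp add: mult.assoc)
  also have "\<dots> \<le> (\<integral>z. C * f s z - a * (f s z * Mw z) \<partial>lborel)"
  proof (rule integral_mono)
    show "f s z * gen_Mw a b lam I0 eps 0 z \<le> C * f s z - a * (f s z * Mw z)" for z
      using mult_left_mono[OF gen_Mw_le_dissipation[OF a_pos eps(1), of eps0 b lam I0 z] f] eps
      by (simp add: C_def algebra_simps)
  qed (use int integrable_f[OF s0] in simp_all)
  also have "\<dots> = C - a * moment s"
    using int integrable_f[OF s0] integral_f[OF s0] by (simp add: moment_def)
  finally show ?thesis unfolding C_def .
qed

lemma set_integrable_moment_rate:
  assumes T: "0 \<le> T"
  shows "set_integrable lborel {0..T} moment_rate"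
  unfolding set_integrable_def
proof (rule Bochner_Integration.integrable_bound)
  show "integrable lborel (\<lambda>s. rate_const * (indicator {0..T} s *\<^sub>R wt_moment s))"
    using set_integrable_wt_moment[OF T] unfolding set_integrable_def by simp
  show "AE s in lborel. norm (indicator {0..T} s *\<^sub>R moment_rate s)
      \<le> norm (rate_const * (indicator {0..T} s *\<^sub>R wt_moment s))"
    using AE_has_wt_moment
  proof eventually_elim
    case (elim s)
    then show ?case
      using abs_moment_rate_le[of s] by (auto simp: indicator_def intro: order_trans[OF _ abs_ge_self])
  qed
qed measurable

lemma integral_trunc_rate_tendsto:
  assumes t: "0 \<le> t"
  shows "(\<lambda>n. \<integral>s\<in>{0..t}. trunc_rate (Suc n) s \<partial>lborel) \<longlonglongrightarrow> (\<integral>s\<in>{0..t}. moment_rate s \<partial>lborel)"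
  unfolding set_lebesgue_integral_def
proof (rule integral_dominated_convergence[where w="\<lambda>s. rate_const * (indicator {0..t} s *\<^sub>R wt_moment s)"])
  show "integrable lborel (\<lambda>s. rate_const * (indicator {0..t} s *\<^sub>R wt_moment s))"
    using set_integrable_wt_moment[OF t] unfolding set_integrable_def by simp
  show "AE s in lborel. (\<lambda>n. indicator {0..t} s *\<^sub>R trunc_rate (Suc n) s)
      \<longlonglongrightarrow> indicator {0..t} s *\<^sub>R moment_rate s"
    using AE_has_wt_moment
  proof eventually_elim
    case (elim s)
    then show ?case
      using trunc_rate_tendsto[of s] by (cases "s \<in> {0..t}") auto
  qed
  show "AE s in lborel. norm (indicator {0..t} s *\<^sub>R trunc_rate (Suc n) s)
      \<le> rate_const * (indicator {0..t} s *\<^sub>R wt_moment s)" for n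
    using AE_has_wt_moment
  proof eventually_elim
    case (elim s)
    then show ?case
      using abs_trunc_rate_le[of s "Suc n"] by (cases "s \<in> {0..t}") auto
  qed
qed measurable

lemma integrable_Mw_trunc_f:
  assumes t: "0 \<le> t" and R: "0 < R"
  shows "integrable lborel (\<lambda>z. Mw_trunc R z * f t z)"
proof (rule Bochner_Integration.integrable_bound)
  show "integrable lborel (\<lambda>z. (2 * R) * f t z)"
    using integrable_f[OF t] by simp
  have "0 \<le> Mw_trunc R z * f t z" "Mw_trunc R z * f t z \<le> (2 * R) * f t z" for z
    using Mw_trunc_bounds[OF R, of z] f_nonneg[OF t, of z] by (simp_all add: mult_right_mono)
  then show "AE z in lborel. norm (Mw_trunc R z * f t z) \<le> norm ((2 * R) * f t z)"
    by (intro AE_I2) (simp add: order_trans[OF _ abs_ge_self])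
qed measurable

lemma integral_Mw_trunc_tendsto:
  assumes t: "0 \<le> t" and int: "integrable lborel (\<lambda>z. f t z * Mw z)"
  shows "(\<lambda>n. \<integral>z. Mw_trunc (Suc n) z * f t z \<partial>lborel) \<longlonglongrightarrow> moment t"
  unfolding moment_def
proof (rule integral_dominated_convergence[where w="\<lambda>z. f t z * Mw z"])
  show "AE z in lborel. (\<lambda>n. Mw_trunc (Suc n) z * f t z) \<longlonglongrightarrow> f t z * Mw z"
  proof (rule AE_I2)
    show "(\<lambda>n. Mw_trunc (Suc n) z * f t z) \<longlonglongrightarrow> f t z * Mw z" for z
      using tendsto_mult_right[OF Mw_trunc_tendsto, of z "f t z"] by (simp add: mult.commute)
  qed
  have "0 \<le> Mw_trunc (Suc n) z * f t z" "Mw_trunc (Suc n) z * f t z \<le> Mw z * f t z" for n z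
    using Mw_trunc_bounds[of "Suc n" z] f_nonneg[OF t, of z] by (simp_all add: mult_right_mono)
  then show "AE z in lborel. norm (Mw_trunc (Suc n) z * f t z) \<le> f t z * Mw z" for n
    by (intro AE_I2) (simp add: mult.commute)
qed (use int in simp_all)

lemma moment_identity:
  assumes t: "0 \<le> t"
  shows "integrable lborel (\<lambda>z. f t z * Mw z)"
    and "moment t = moment 0 + (\<integral>s\<in>{0..t}. moment_rate s \<partial>lborel)"
proof -
  define L where "L = moment 0 + (\<integral>s\<in>{0..t}. moment_rate s \<partial>lborel)"
  have int0: "integrable lborel (\<lambda>z. f 0 z * Mw z)"
    using initial_moment f_nonneg[of 0] by (simp add: in_L1M_def)
  have "(\<lambda>n. (\<integral>z. Mw_trunc (Suc n) z * f 0 z \<partial>lborel)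
      + (\<integral>s\<in>{0..t}. trunc_rate (Suc n) s \<partial>lborel)) \<longlonglongrightarrow> L"
    unfolding L_def
    by (intro tendsto_add integral_Mw_trunc_tendsto[OF order_refl int0] integral_trunc_rate_tendsto[OF t])
  then have conv: "(\<lambda>n. \<integral>z. Mw_trunc (Suc n) z * f t z \<partial>lborel) \<longlonglongrightarrow> L"
    by (simp add: weak_form_Mw_trunc[OF t])
  then have "Bseq (\<lambda>n. \<integral>z. Mw_trunc (Suc n) z * f t z \<partial>lborel)"
    by (rule convergent_imp_Bseq[OF convergentI])
  then obtain B where B: "\<And>n. norm (\<integral>z. Mw_trunc (Suc n) z * f t z \<partial>lborel) \<le> B"
    by (auto simp: Bseq_def)
  show int: "integrable lborel (\<lambda>z. f t z * Mw z)"
  proof (rule integrable_of_nonneg_tendsto_bounded)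
    show "integrable lborel (\<lambda>z. Mw_trunc (Suc n) z * f t z)" for n
      by (rule integrable_Mw_trunc_f[OF t]) simp
    show "0 \<le> Mw_trunc (Suc n) z * f t z" for n z
      using Mw_trunc_bounds(1)[of "Suc n" z] f_nonneg[OF t] by simp
    show "(\<lambda>n. Mw_trunc (Suc n) z * f t z) \<longlonglongrightarrow> f t z * Mw z" for z
      using tendsto_mult_right[OF Mw_trunc_tendsto, of z "f t z"] by (simp add: mult.commute)
    show "(\<integral>z. Mw_trunc (Suc n) z * f t z \<partial>lborel) \<le> B" for n
      using B[of n] by simp
  qed measurable
  show "moment t = L"
    using LIMSEQ_unique[OF integral_Mw_trunc_tendsto[OF t int] conv] .
qed

lemma moment_le:
  assumes "0 \<le> t"
  shows "moment t \<le> max (dissipation_const a b lam I0 eps0 / a) (moment 0)"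
proof (rule dissipative_integral_equation_bound[OF a_pos set_integrable_moment_rate
      moment_identity(2) _ assms])
  show "AE s in lborel. 0 \<le> s \<longrightarrow> moment_rate s \<le> dissipation_const a b lam I0 eps0 - a * moment s"
    using AE_has_wt_moment by eventually_elim (auto intro: moment_rate_le)
qed

lemma in_L1M_f: "0 \<le> t \<Longrightarrow> in_L1M (f t)"
  and L1M_norm_eq_moment: "0 \<le> t \<Longrightarrow> L1M_norm (f t) = moment t"
  using moment_identity(1) f_nonneg by (simp_all add: in_L1M_def L1M_norm_def moment_def)

lemma abs_Jf_le_moment:
  assumes t: "0 \<le> t"
  shows "\<bar>Jf (f t)\<bar> \<le> moment t"
proof -
  have "\<bar>Jf (f t)\<bar> \<le> (\<integral>z. norm (snd z * f t z) \<partial>lborel)"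
    unfolding Jf_def real_norm_def[symmetric] by (rule integral_norm_bound)
  also have "\<dots> \<le> moment t"
    unfolding moment_def
  proof (rule integral_mono'[OF moment_identity(1)[OF t]])
    show "norm (snd z * f t z) \<le> f t z * Mw z" for z
      using mult_right_mono[OF abs_snd_le_Mw f_nonneg[OF t]] f_nonneg[OF t, of z]
      by (simp add: abs_mult mult.commute)
    show "0 \<le> f t z * Mw z" for z
      using f_nonneg[OF t, of z] Mw_ge_1[of z] by simp
  qed
  finally show ?thesis .
qed

end

theorem lemma3p1:
  fixes a b lam I0 eps0 :: real
  assumes "a > 0" and "b > 0" and "eps0 > 0"
  shows "(\<exists>C0>0. \<forall>eps f. 0 \<le> eps \<and> eps < eps0 \<and> is_solution a b lam I0 eps f
              \<and> in_L1M (f 0) \<longrightarrow>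
            (\<forall>t\<ge>0. in_L1M (f t) \<and> L1M_norm (f t) \<le> max C0 (L1M_norm (f 0))))
       \<and> (\<forall>m. \<exists>C0'>0. \<forall>eps f. 0 \<le> eps \<and> eps < eps0 \<and> is_solution a b lam I0 eps f
              \<and> in_L1M (f 0) \<and> L1M_norm (f 0) = m \<longrightarrow>
            (\<forall>t\<ge>0. \<bar>Jf (f t)\<bar> \<le> C0'))"
proof (intro conjI allI)
  define C0 where "C0 = dissipation_const a b lam I0 eps0 / a"
  have C0: "0 < C0"
    unfolding C0_def using dissipation_const_pos[OF assms(1)] assms(1) by simp
  have bounds: "in_L1M (f t) \<and> L1M_norm (f t) \<le> max C0 (L1M_norm (f 0))
      \<and> \<bar>Jf (f t)\<bar> \<le> max C0 (L1M_norm (f 0))"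
    if "0 \<le> eps \<and> eps < eps0 \<and> is_solution a b lam I0 eps f \<and> in_L1M (f 0)" "0 \<le> t" for eps f t
  proof -
    interpret fhn_solution a b lam I0 eps0 eps f
      using that(1) assms(1) by unfold_locales auto
    show ?thesis
      using in_L1M_f moment_le abs_Jf_le_moment L1M_norm_eq_moment that(2)
      by (fastforce simp: C0_def)
  qed
  show "\<exists>C0>0. \<forall>eps f. 0 \<le> eps \<and> eps < eps0 \<and> is_solution a b lam I0 eps f \<and> in_L1M (f 0) \<longrightarrow>
      (\<forall>t\<ge>0. in_L1M (f t) \<and> L1M_norm (f t) \<le> max C0 (L1M_norm (f 0)))"
    using C0 bounds by blast
  fix m :: real
  show "\<exists>C0'>0. \<forall>eps f. 0 \<le> eps \<and> eps < eps0 \<and> is_solution a b lam I0 eps f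
      \<and> in_L1M (f 0) \<and> L1M_norm (f 0) = m \<longrightarrow> (\<forall>t\<ge>0. \<bar>Jf (f t)\<bar> \<le> C0')"
    using C0 bounds by (intro exI[of _ "max C0 \<bar>m\<bar> + 1"]) fastforce
qed

end
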